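(* There is an absolute constant $c$ such that the following holds. Let $G$ be a simple graph given as a stream of $m$ distinct edges, with $W\ge m$ wedges and $T\ge1$ triangles, and $\kappa=3T/W$. Fix $\beta\in(0,1)$ sufficiently small, let $\beta'=\beta/5$, and let $r_1,\dots,r_s$ be $s$ independent uniformly random edges of $G$ with $s\ge c\,m/(\beta^3\sqrt{T})$. Let $Y$ be the number of index pairs $i<j$ with $\{r_i,r_j\}$ a wedge and $Z$ the number with $\{r_i,r_j\}$ a future-closed wedge. Let $\mathcal{E}$ be the event $\max(|Y-\mathbf{E}[Y]|,|Z-\mathbf{E}[Z]|)\le\beta'\mathbf{E}[Y]$. Then $\Pr[\mathcal{E}]>1-2\beta'$, on $\mathcal{E}$ we have $Y>0$, and $|\mathbf{E}[Z/Y\mid\mathcal{E}]-\kappa/3|\le4\beta'$.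
   Context: A wedge is a path of length 2, i.e. an unordered pair of distinct edges sharing exactly one vertex; $W$ is the number of wedges of $G$. Edges carry their stream positions $e_1,\dots,e_m$. For each triangle of $G$ with edges $e_i,e_j,e_k$, $i<j<k$, the wedge $\{e_i,e_j\}$ is called future-closed; there are exactly $T$ future-closed wedges. *)

theory Defs
  imports Complex_Main "HOL-Library.FuncSet"
begin

definition edge_stream :: "'a set list \<Rightarrow> bool" where
  "edge_stream es \<longleftrightarrow> distinct es \<and> (\<forall>e\<in>set es. card e = 2)"

definition is_wedge :: "'a set \<Rightarrow> 'a set \<Rightarrow> bool" where
  "is_wedge e f \<longleftrightarrow> e \<noteq> f \<and> card (e \<inter> f) = 1"

definition num_wedges :: "'a set list \<Rightarrow> nat" where
  "num_wedges es = card {{e, f} | e f. e \<in> set es \<and> f \<in> set es \<and> is_wedge e f}"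

definition num_triangles :: "'a set list \<Rightarrow> nat" where
  "num_triangles es = card {t. card t = 3 \<and> (\<forall>u\<in>t. \<forall>v\<in>t. u \<noteq> v \<longrightarrow> {u, v} \<in> set es)}"

definition fc_pos :: "'a set list \<Rightarrow> nat \<Rightarrow> nat \<Rightarrow> bool" where
  "fc_pos es i j \<longleftrightarrow> i < j \<and> (\<exists>k. j < k \<and> k < length es \<and>
      is_wedge (es ! i) (es ! j) \<and> card (es ! i \<union> es ! j \<union> es ! k) = 3)"

definition fc_wedge_pos :: "'a set list \<Rightarrow> nat \<Rightarrow> nat \<Rightarrow> bool" where
  "fc_wedge_pos es p q \<longleftrightarrow> fc_pos es p q \<or> fc_pos es q p"

text \<open>Sample space: s independent uniform edges, encoded as sequences of stream positions
  r : {0..<s} \<rightarrow> {0..<m}, with the uniform distribution (edges are distinct, so a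
  uniform position is a uniform edge).\<close>
definition samples :: "'a set list \<Rightarrow> nat \<Rightarrow> (nat \<Rightarrow> nat) set" where
  "samples es s = PiE {0..<s} (\<lambda>_. {0..<length es})"

definition Ycount :: "'a set list \<Rightarrow> nat \<Rightarrow> (nat \<Rightarrow> nat) \<Rightarrow> nat" where
  "Ycount es s r = card {(i, j). i < j \<and> j < s \<and> is_wedge (es ! r i) (es ! r j)}"

definition Zcount :: "'a set list \<Rightarrow> nat \<Rightarrow> (nat \<Rightarrow> nat) \<Rightarrow> nat" where
  "Zcount es s r = card {(i, j). i < j \<and> j < s \<and> fc_wedge_pos es (r i) (r j)}"

definition uexp :: "'b set \<Rightarrow> ('b \<Rightarrow> real) \<Rightarrow> real" where
  "uexp \<Omega> X = (\<Sum>x\<in>\<Omega>. X x) / real (card \<Omega>)"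

definition uprob :: "'b set \<Rightarrow> ('b \<Rightarrow> bool) \<Rightarrow> real" where
  "uprob \<Omega> P = real (card {x\<in>\<Omega>. P x}) / real (card \<Omega>)"

definition ucondexp :: "'b set \<Rightarrow> ('b \<Rightarrow> bool) \<Rightarrow> ('b \<Rightarrow> real) \<Rightarrow> real" where
  "ucondexp \<Omega> P X = uexp {x\<in>\<Omega>. P x} X"

end

theory Submission
  imports Defs
begin

text \<open>
  A fixed pair of sample indices hits each ordered pair of stream positions with
  probability 1/m^2, and wedges and future-closed wedges correspond to 2W and 2T ordered pairs, so
  E[Y] = (s choose 2) 2W/m^2 and E[Z] = (T/W) E[Y] = (\<kappa>/3) E[Y]. In the second moment only index
  pairs sharing an index contribute beyond the squared mean; through the wedge degrees d(e) of the
  edges, which satisfy d(e)^2 \<le> 4W, this gives Var \<le> (s choose 2) (2W/m^2 + 4s 2W \<surd>(4W)/m^3).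
  For s \<ge> c m/(\<beta>^3 \<surd>T), Chebyshev's inequality shows that each of Y and Z leaves the window
  \<plusminus>\<beta>' E[Y] around its mean with probability below \<beta>'. On the remaining event
  Y \<ge> (1 - \<beta>') E[Y] > 0 and |Z/Y - \<kappa>/3| \<le> 2\<beta>'/(1 - \<beta>') \<le> 4\<beta>', a bound that survives averaging.
\<close>

section \<open>Uniform distribution on a finite set\<close>

lemma sum_power2_deviation_uexp:
  fixes X :: "'b \<Rightarrow> real"
  assumes "finite \<Omega>"
  shows "(\<Sum>x\<in>\<Omega>. (X x - uexp \<Omega> X) ^ 2) = (\<Sum>x\<in>\<Omega>. X x ^ 2) - (\<Sum>x\<in>\<Omega>. X x) ^ 2 / real (card \<Omega>)"
proof (cases "\<Omega> = {}")
  case False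
  define S N where "S = (\<Sum>x\<in>\<Omega>. X x)" and "N = real (card \<Omega>)"
  have N: "N > 0" using assms False by (simp add: N_def card_gt_0_iff)
  have lin: "(\<Sum>x\<in>\<Omega>. 2 * (S / N) * X x) = 2 * (S / N) * S"
    by (simp only: S_def sum_distrib_left)
  have "(\<Sum>x\<in>\<Omega>. (X x - S / N) ^ 2) = (\<Sum>x\<in>\<Omega>. X x ^ 2 - 2 * (S / N) * X x + (S / N) ^ 2)"
    by (intro sum.cong) (auto simp: power2_diff)
  also have "\<dots> = (\<Sum>x\<in>\<Omega>. X x ^ 2) - 2 * (S / N) * S + N * (S / N) ^ 2"
    by (simp only: sum.distrib sum_subtractf lin sum_constant N_def[symmetric])
  also have "\<dots> = (\<Sum>x\<in>\<Omega>. X x ^ 2) - S ^ 2 / N"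
    using N by (simp add: field_simps power2_eq_square)
  finally show ?thesis by (simp add: uexp_def S_def N_def)
qed simp

lemma chebyshev_card_less:
  fixes X :: "'b \<Rightarrow> real"
  assumes "finite \<Omega>" "t > 0" "(\<Sum>x\<in>\<Omega>. (X x - \<mu>) ^ 2) < \<epsilon> * t ^ 2 * real (card \<Omega>)"
  shows "real (card {x\<in>\<Omega>. t < \<bar>X x - \<mu>\<bar>}) < \<epsilon> * real (card \<Omega>)"
proof -
  let ?D = "{x\<in>\<Omega>. t < \<bar>X x - \<mu>\<bar>}"
  have "real (card ?D) * t ^ 2 = (\<Sum>x\<in>?D. t ^ 2)" by simp
  also have "\<dots> \<le> (\<Sum>x\<in>?D. (X x - \<mu>) ^ 2)"
  proof (rule sum_mono)
    fix x assume "x \<in> ?D"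
    then have "t ^ 2 \<le> \<bar>X x - \<mu>\<bar> ^ 2" using assms(2) by (intro power_mono) auto
    then show "t ^ 2 \<le> (X x - \<mu>) ^ 2" by simp
  qed
  also have "\<dots> \<le> (\<Sum>x\<in>\<Omega>. (X x - \<mu>) ^ 2)"
    using assms(1) by (intro sum_mono2) auto
  finally have "real (card ?D) * t ^ 2 < (\<epsilon> * real (card \<Omega>)) * t ^ 2"
    using assms(3) by (simp add: algebra_simps)
  then show ?thesis using assms(2) by simp
qed

lemma abs_uexp_sub_le:
  assumes "finite A" "A \<noteq> {}" "\<And>x. x \<in> A \<Longrightarrow> \<bar>f x - q\<bar> \<le> e"
  shows "\<bar>uexp A f - q\<bar> \<le> e"
proof -
  have N: "real (card A) > 0" using assms by (simp add: card_gt_0_iff)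
  have "\<bar>uexp A f - q\<bar> = \<bar>\<Sum>x\<in>A. f x - q\<bar> / real (card A)"
    using N by (simp add: uexp_def sum_subtractf field_simps)
  also have "\<dots> \<le> (\<Sum>x\<in>A. e) / real (card A)"
    using N assms(3) by (intro divide_right_mono order.trans[OF sum_abs sum_mono]) auto
  also have "\<dots> = e" using N by simp
  finally show ?thesis .
qed

lemma abs_divide_sub_le:
  fixes e q y z :: real
  assumes "e > 0" "0 \<le> q" "q \<le> 1" "0 < \<beta>" "\<beta> \<le> 1/5"
    and "\<bar>y - e\<bar> \<le> \<beta> * e" "\<bar>z - q * e\<bar> \<le> \<beta> * e"
  shows "\<bar>z / y - q\<bar> \<le> 4 * \<beta>"
proof -
  have y: "y \<ge> 4/5 * e" using assms(1,5,6) mult_right_mono[OF assms(5), of e] by linarith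
  then have y0: "y > 0" using assms(1) by simp
  have "\<bar>q * e - q * y\<bar> \<le> \<beta> * e"
    using mult_mono[OF assms(3) assms(6)] assms(2) by (simp add: abs_mult abs_minus_commute right_diff_distrib[symmetric])
  then have "\<bar>z - q * y\<bar> \<le> 2 * \<beta> * e" using assms(7) by linarith
  moreover have "\<bar>z / y - q\<bar> = \<bar>z - q * y\<bar> / y"
    using y0 by (simp add: field_simps)
  ultimately have "\<bar>z / y - q\<bar> \<le> 2 * \<beta> * e / y"
    using y0 by (simp add: divide_right_mono)
  also have "\<dots> \<le> 2 * \<beta> * e / (4/5 * e)"
    using y assms(1,4) by (intro divide_left_mono) auto
  also have "\<dots> \<le> 4 * \<beta>" using assms(1,4) by (simp add: field_simps)
  finally show ?thesis .
qed

lemma uprob_neither_gt: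
  assumes "finite \<Omega>" "real (card {r\<in>\<Omega>. A r}) < \<beta> * real (card \<Omega>)"
    "real (card {r\<in>\<Omega>. B r}) < \<beta> * real (card \<Omega>)"
  shows "uprob \<Omega> (\<lambda>r. \<not> A r \<and> \<not> B r) > 1 - 2 * \<beta>"
proof -
  let ?good = "{r\<in>\<Omega>. \<not> A r \<and> \<not> B r}" and ?bad = "{r\<in>\<Omega>. A r \<or> B r}"
  have "0 < \<beta> * real (card \<Omega>)"
    using assms(2) by (meson of_nat_0_le_iff order_le_less_trans)
  then have N: "real (card \<Omega>) > 0" by (cases "card \<Omega> = 0") auto
  have "card ?bad \<le> card ({r\<in>\<Omega>. A r} \<union> {r\<in>\<Omega>. B r})"
    using assms(1) by (intro card_mono) auto
  also have "\<dots> \<le> card {r\<in>\<Omega>. A r} + card {r\<in>\<Omega>. B r}"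
    by (rule card_Un_le)
  finally have "real (card ?bad) < 2 * \<beta> * real (card \<Omega>)"
    using assms(2,3) by linarith
  moreover have "card ?good + card ?bad = card \<Omega>"
  proof -
    have "?good \<union> ?bad = \<Omega>" "?good \<inter> ?bad = {}" by auto
    then show ?thesis using assms(1) card_Un_disjoint[of ?good ?bad] by simp
  qed
  ultimately have "real (card ?good) > (1 - 2 * \<beta>) * real (card \<Omega>)"
    by (simp add: algebra_simps flip: of_nat_add)
  then show ?thesis
    using N by (simp add: uprob_def pos_less_divide_eq)
qed

lemma concentrated_ratio_estimate:
  fixes Y Z :: "'b \<Rightarrow> real"
  assumes "finite \<Omega>" "uexp \<Omega> Y > 0" "uexp \<Omega> Z = q * uexp \<Omega> Y" "0 \<le> q" "q \<le> 1" "0 < \<beta>" "\<beta> \<le> 1/5"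
    and "real (card {r\<in>\<Omega>. \<beta> * uexp \<Omega> Y < \<bar>Y r - uexp \<Omega> Y\<bar>}) < \<beta> * real (card \<Omega>)"
    and "real (card {r\<in>\<Omega>. \<beta> * uexp \<Omega> Y < \<bar>Z r - uexp \<Omega> Z\<bar>}) < \<beta> * real (card \<Omega>)"
  defines "E \<equiv> \<lambda>r. max \<bar>Y r - uexp \<Omega> Y\<bar> \<bar>Z r - uexp \<Omega> Z\<bar> \<le> \<beta> * uexp \<Omega> Y"
  shows "uprob \<Omega> E > 1 - 2 * \<beta> \<and> (\<forall>r\<in>\<Omega>. E r \<longrightarrow> Y r > 0)
    \<and> \<bar>ucondexp \<Omega> E (\<lambda>r. Z r / Y r) - q\<bar> \<le> 4 * \<beta>"
proof -
  have "E = (\<lambda>r. \<not> \<beta> * uexp \<Omega> Y < \<bar>Y r - uexp \<Omega> Y\<bar> \<and> \<not> \<beta> * uexp \<Omega> Y < \<bar>Z r - uexp \<Omega> Z\<bar>)"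
    by (auto simp: E_def fun_eq_iff)
  then have prob: "uprob \<Omega> E > 1 - 2 * \<beta>"
    using uprob_neither_gt[OF assms(1,8,9)] by simp
  have pointwise: "\<bar>Y r - uexp \<Omega> Y\<bar> \<le> \<beta> * uexp \<Omega> Y" "\<bar>Z r - q * uexp \<Omega> Y\<bar> \<le> \<beta> * uexp \<Omega> Y"
    if "E r" for r
    using that assms(3) by (auto simp: E_def)
  have positive: "\<forall>r\<in>\<Omega>. E r \<longrightarrow> Y r > 0"
  proof (intro ballI impI)
    fix r assume "E r"
    moreover have "\<beta> * uexp \<Omega> Y < uexp \<Omega> Y" using assms(2,7) by simp
    ultimately show "Y r > 0" using pointwise(1) by fastforce
  qed
  have "uprob \<Omega> E > 0" using prob assms(7) by linarith
  then have "{r\<in>\<Omega>. E r} \<noteq> {}" by (metis card.empty div_0 of_nat_0 uprob_def less_irrefl)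
  then have "\<bar>ucondexp \<Omega> E (\<lambda>r. Z r / Y r) - q\<bar> \<le> 4 * \<beta>"
    unfolding ucondexp_def using assms(1-7) pointwise
    by (intro abs_uexp_sub_le abs_divide_sub_le) auto
  with prob positive show ?thesis by blast
qed

section \<open>Pair counts of a uniform sample\<close>

definition index_pairs :: "nat \<Rightarrow> (nat \<times> nat) set" where
  "index_pairs s = {(i, j). i < j \<and> j < s}"

definition pair_count :: "('b \<Rightarrow> 'b \<Rightarrow> bool) \<Rightarrow> nat \<Rightarrow> (nat \<Rightarrow> 'b) \<Rightarrow> real" where
  "pair_count g s r = (\<Sum>(i, j)\<in>index_pairs s. of_bool (g (r i) (r j)))"

definition rel_count :: "('b \<Rightarrow> 'b \<Rightarrow> bool) \<Rightarrow> 'b set \<Rightarrow> real" where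
  "rel_count g B = (\<Sum>a\<in>B. \<Sum>b\<in>B. of_bool (g a b))"

definition rel_degree :: "('b \<Rightarrow> 'b \<Rightarrow> bool) \<Rightarrow> 'b set \<Rightarrow> 'b \<Rightarrow> real" where
  "rel_degree g B a = (\<Sum>b\<in>B. of_bool (g a b))"

lemma finite_index_pairs [simp]: "finite (index_pairs s)"
  unfolding index_pairs_def by (rule finite_subset[of _ "{..<s} \<times> {..<s}"]) auto

lemma card_index_pairs: "2 * card (index_pairs s) = s * (s - 1)"
proof (induction s)
  case 0
  then show ?case by (simp add: index_pairs_def)
next
  case (Suc s)
  have "index_pairs (Suc s) = index_pairs s \<union> (\<lambda>i. (i, s)) ` {..<s}"
    by (auto simp: index_pairs_def)
  moreover have "index_pairs s \<inter> (\<lambda>i. (i, s)) ` {..<s} = {}"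
    by (auto simp: index_pairs_def)
  moreover have "card ((\<lambda>i. (i, s)) ` {..<s}) = s"
    by (subst card_image) (auto simp: inj_on_def)
  ultimately have "card (index_pairs (Suc s)) = card (index_pairs s) + s"
    by (simp add: card_Un_disjoint)
  then show ?case using Suc by (cases s) (auto simp: algebra_simps)
qed

lemma card_index_pairs_ge:
  assumes "2 \<le> s"
  shows "real s ^ 2 / 4 \<le> real (card (index_pairs s))"
proof -
  have "2 * real (card (index_pairs s)) = real (s * (s - 1))"
    unfolding card_index_pairs[symmetric] by simp
  also have "\<dots> = real s * (real s - 1)"
    using assms by (simp add: of_nat_diff)
  finally have "2 * real (card (index_pairs s)) = real s * (real s - 1)" .
  moreover have "2 * real s \<le> real s * real s"
    using assms by (intro mult_right_mono) auto
  ultimately show ?thesis by (simp add: power2_eq_square algebra_simps)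
qed

lemma pair_count_eq_card:
  "pair_count g s r = real (card {(i, j). i < j \<and> j < s \<and> g (r i) (r j)})"
proof -
  have "{(i, j). i < j \<and> j < s \<and> g (r i) (r j)} = index_pairs s \<inter> {(i, j). g (r i) (r j)}"
    by (auto simp: index_pairs_def)
  then show ?thesis
    unfolding pair_count_def by (simp add: case_prod_beta')
qed

lemma rel_count_eq_card:
  "finite B \<Longrightarrow> rel_count g B = real (card {(a, b). a \<in> B \<and> b \<in> B \<and> g a b})"
proof -
  assume B: "finite B"
  have "rel_count g B = (\<Sum>(a, b)\<in>B \<times> B. of_bool (g a b))"
    unfolding rel_count_def by (simp add: sum.cartesian_product del: sum_of_bool_eq)
  also have "\<dots> = real (card ((B \<times> B) \<inter> {(a, b). g a b}))"
    using B by (simp add: case_prod_beta')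
  also have "(B \<times> B) \<inter> {(a, b). g a b} = {(a, b). a \<in> B \<and> b \<in> B \<and> g a b}"
    by auto
  finally show ?thesis .
qed

lemma rel_count_mono: "(\<And>a b. g a b \<Longrightarrow> w a b) \<Longrightarrow> rel_count g B \<le> rel_count w B"
  unfolding rel_count_def by (intro sum_mono) auto

lemma rel_count_le_card_square: "rel_count g B \<le> real (card B) ^ 2"
proof -
  have "rel_count g B \<le> (\<Sum>a\<in>B. \<Sum>b\<in>B. 1)"
    unfolding rel_count_def by (intro sum_mono) auto
  then show ?thesis by (simp add: power2_eq_square)
qed

lemma sum_rel_degree: "(\<Sum>a\<in>B. rel_degree g B a) = rel_count g B"
  unfolding rel_degree_def rel_count_def ..

lemma sum_power2_rel_degree_le:
  assumes "\<And>a. a \<in> B \<Longrightarrow> rel_degree w B a \<le> d"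
  shows "(\<Sum>a\<in>B. rel_degree w B a ^ 2) \<le> d * rel_count w B"
proof -
  have "(\<Sum>a\<in>B. rel_degree w B a ^ 2) \<le> (\<Sum>a\<in>B. d * rel_degree w B a)"
    unfolding power2_eq_square
    by (intro sum_mono mult_right_mono assms) (simp_all add: rel_degree_def sum_nonneg)
  also have "\<dots> = d * rel_count w B"
    by (simp add: sum_distrib_left[symmetric] sum_rel_degree)
  finally show ?thesis .
qed

lemma sum_PiE_const_remove:
  assumes "finite I" "i \<in> I"
  shows "(\<Sum>r\<in>PiE I (\<lambda>_. B). F r) = (\<Sum>a\<in>B. \<Sum>r\<in>PiE (I - {i}) (\<lambda>_. B). (F (r(i := a)) :: real))"
proof -
  have "PiE I (\<lambda>_. B) = (\<lambda>(a, r). r(i := a)) ` (B \<times> PiE (I - {i}) (\<lambda>_. B))"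
    using assms by (metis PiE_insert_eq insert_Diff)
  then have "(\<Sum>r\<in>PiE I (\<lambda>_. B). F r) = (\<Sum>(a, r)\<in>B \<times> PiE (I - {i}) (\<lambda>_. B). F (r(i := a)))"
    using inj_combinator[of i "I - {i}" "\<lambda>_. B"] by (simp add: sum.reindex case_prod_beta')
  then show ?thesis by (simp add: sum.cartesian_product)
qed

lemma card_PiE_const: "finite I \<Longrightarrow> card (PiE I (\<lambda>_. B)) = card B ^ card I"
  by (simp add: card_PiE)

lemma sum_PiE_const_two_coords:
  assumes "finite I" "i \<in> I" "j \<in> I" "i \<noteq> j"
  shows "(\<Sum>r\<in>PiE I (\<lambda>_. B). (f (r i) (r j) :: real))
    = real (card B) ^ (card I - 2) * (\<Sum>a\<in>B. \<Sum>b\<in>B. f a b)"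
proof -
  have "(\<Sum>r\<in>PiE I (\<lambda>_. B). f (r i) (r j))
      = (\<Sum>a\<in>B. \<Sum>b\<in>B. \<Sum>r\<in>PiE (I - {i} - {j}) (\<lambda>_. B). f a b)"
    using assms by (simp add: sum_PiE_const_remove[of I i] sum_PiE_const_remove[of "I - {i}" j])
  also have "\<dots> = (\<Sum>a\<in>B. \<Sum>b\<in>B. real (card B) ^ (card I - 2) * f a b)"
    using assms by (simp add: card_PiE_const card_Diff_singleton_if eval_nat_numeral)
  finally show ?thesis by (simp add: sum_distrib_left)
qed

lemma sum_PiE_const_three_coords:
  assumes "finite I" "i \<in> I" "j \<in> I" "k \<in> I" "i \<noteq> j" "i \<noteq> k" "j \<noteq> k"
  shows "(\<Sum>r\<in>PiE I (\<lambda>_. B). (f (r i) (r j) (r k) :: real))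
    = real (card B) ^ (card I - 3) * (\<Sum>a\<in>B. \<Sum>b\<in>B. \<Sum>c\<in>B. f a b c)"
proof -
  have "(\<Sum>r\<in>PiE I (\<lambda>_. B). f (r i) (r j) (r k))
      = (\<Sum>a\<in>B. \<Sum>b\<in>B. \<Sum>c\<in>B. \<Sum>r\<in>PiE (I - {i} - {j} - {k}) (\<lambda>_. B). f a b c)"
    using assms by (simp add: sum_PiE_const_remove[of I i] sum_PiE_const_remove[of "I - {i}" j]
        sum_PiE_const_remove[of "I - {i} - {j}" k])
  also have "\<dots> = (\<Sum>a\<in>B. \<Sum>b\<in>B. \<Sum>c\<in>B. real (card B) ^ (card I - 3) * f a b c)"
    using assms by (simp add: card_PiE_const card_Diff_singleton_if eval_nat_numeral)
  finally show ?thesis by (simp add: sum_distrib_left)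
qed

lemma sum_PiE_const_four_coords:
  assumes "finite I" "i \<in> I" "j \<in> I" "k \<in> I" "l \<in> I"
    "i \<noteq> j" "i \<noteq> k" "i \<noteq> l" "j \<noteq> k" "j \<noteq> l" "k \<noteq> l"
  shows "(\<Sum>r\<in>PiE I (\<lambda>_. B). (f (r i) (r j) (r k) (r l) :: real))
    = real (card B) ^ (card I - 4) * (\<Sum>a\<in>B. \<Sum>b\<in>B. \<Sum>c\<in>B. \<Sum>d\<in>B. f a b c d)"
proof -
  have "(\<Sum>r\<in>PiE I (\<lambda>_. B). f (r i) (r j) (r k) (r l))
      = (\<Sum>a\<in>B. \<Sum>b\<in>B. \<Sum>c\<in>B. \<Sum>d\<in>B. \<Sum>r\<in>PiE (I - {i} - {j} - {k} - {l}) (\<lambda>_. B). f a b c d)"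
    using assms by (simp add: sum_PiE_const_remove[of I i] sum_PiE_const_remove[of "I - {i}" j]
        sum_PiE_const_remove[of "I - {i} - {j}" k] sum_PiE_const_remove[of "I - {i} - {j} - {k}" l])
  also have "\<dots> = (\<Sum>a\<in>B. \<Sum>b\<in>B. \<Sum>c\<in>B. \<Sum>d\<in>B. real (card B) ^ (card I - 4) * f a b c d)"
    using assms by (simp add: card_PiE_const card_Diff_singleton_if eval_nat_numeral)
  finally show ?thesis by (simp add: sum_distrib_left)
qed

lemma sum_PiE_pair_indicator:
  assumes "finite B" "(i, j) \<in> index_pairs s"
  shows "(\<Sum>r\<in>PiE {0..<s} (\<lambda>_. B). of_bool (g (r i) (r j)) :: real)
    = real (card B) ^ (s - 2) * rel_count g B"
  using assms sum_PiE_const_two_coords[where I="{0..<s}" and B=B and f="\<lambda>a b. of_bool (g a b)"]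
  by (auto simp: index_pairs_def rel_count_def simp del: sum_of_bool_eq)

lemma sum_pair_count:
  assumes "finite B"
  shows "(\<Sum>r\<in>PiE {0..<s} (\<lambda>_. B). pair_count g s r)
    = real (card (index_pairs s)) * real (card B) ^ (s - 2) * rel_count g B"
proof -
  have "(\<Sum>r\<in>PiE {0..<s} (\<lambda>_. B). pair_count g s r)
      = (\<Sum>(i, j)\<in>index_pairs s. \<Sum>r\<in>PiE {0..<s} (\<lambda>_. B). of_bool (g (r i) (r j)))"
    unfolding pair_count_def case_prod_beta' by (rule sum.swap)
  also have "\<dots> = (\<Sum>(i, j)\<in>index_pairs s. real (card B) ^ (s - 2) * rel_count g B)"
    using sum_PiE_pair_indicator[OF assms] by (intro sum.cong) auto
  finally show ?thesis by simp
qed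

lemma uexp_pair_count:
  assumes "finite B" "B \<noteq> {}" "s \<ge> 2"
  shows "uexp (PiE {0..<s} (\<lambda>_. B)) (pair_count g s)
    = real (card (index_pairs s)) * rel_count g B / real (card B) ^ 2"
proof -
  have M: "real (card B) > 0" using assms by (simp add: card_gt_0_iff)
  have "real (card B) ^ (s - 2) = real (card B) ^ s / real (card B) ^ 2"
    using M assms(3) by (simp add: power_diff)
  then show ?thesis
    using M by (simp add: uexp_def sum_pair_count[OF assms(1)] card_PiE_const)
qed

lemma overlapping_index_pairsE:
  assumes "(i, j) \<in> index_pairs s" "(k, l) \<in> index_pairs s" "(i, j) \<noteq> (k, l)" "{i, j} \<inter> {k, l} \<noteq> {}"
  obtains x y z where "x < s" "y < s" "z < s" "x \<noteq> y" "x \<noteq> z" "y \<noteq> z"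
    "{i, j} = {x, y}" "{k, l} = {x, z}"
proof -
  have ij: "i < j" "j < s" "k < l" "l < s" using assms(1,2) by (auto simp: index_pairs_def)
  consider "i = k" | "i = l" | "j = k" | "j = l" using assms(4) by auto
  then show thesis
  proof cases
    case 1
    then show thesis using that[of i j l] ij assms(3) by auto
  next
    case 2
    then show thesis using that[of i j k] ij by auto
  next
    case 3
    then show thesis using that[of j i l] ij by auto
  next
    case 4
    then show thesis using that[of j i k] ij assms(3) by auto
  qed
qed

lemma of_bool_le_symmetric_superrel:
  assumes "{i, j} = {x, y}" "\<And>a b. g a b \<Longrightarrow> w a b" "\<And>a b. w a b = w b a"
  shows "of_bool (g (r i) (r j)) \<le> (of_bool (w (r x) (r y)) :: real)"
  using assms by (auto simp: doubleton_eq_iff)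

lemma sum_PiE_disjoint_pairs:
  assumes "finite B" "(i, j) \<in> index_pairs s" "(k, l) \<in> index_pairs s" "{i, j} \<inter> {k, l} = {}"
  shows "(\<Sum>r\<in>PiE {0..<s} (\<lambda>_. B). of_bool (g (r i) (r j)) * of_bool (g (r k) (r l)) :: real)
    = real (card B) ^ (s - 4) * rel_count g B ^ 2"
proof -
  have "(\<Sum>r\<in>PiE {0..<s} (\<lambda>_. B). of_bool (g (r i) (r j)) * of_bool (g (r k) (r l)) :: real)
      = real (card B) ^ (s - 4) * (\<Sum>a\<in>B. \<Sum>b\<in>B. \<Sum>c\<in>B. \<Sum>d\<in>B. of_bool (g a b) * of_bool (g c d))"
    using assms sum_PiE_const_four_coords[where I="{0..<s}" and B=B and f="\<lambda>a b c d. of_bool (g a b) * of_bool (g c d)"]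
    by (auto simp: index_pairs_def simp del: sum_mult_of_bool_eq sum_of_bool_mult_eq)
  also have "(\<Sum>a\<in>B. \<Sum>b\<in>B. \<Sum>c\<in>B. \<Sum>d\<in>B. of_bool (g a b) * of_bool (g c d)) = rel_count g B ^ 2"
    unfolding rel_count_def power2_eq_square sum_distrib_left sum_distrib_right
    by (simp add: mult.commute del: sum_mult_of_bool_eq sum_of_bool_mult_eq sum_of_bool_eq)
  finally show ?thesis .
qed

lemma sum_PiE_overlapping_pairs:
  assumes "finite B" "\<And>a b. g a b \<Longrightarrow> w a b" "\<And>a b. w a b = w b a"
    and "(i, j) \<in> index_pairs s" "(k, l) \<in> index_pairs s" "(i, j) \<noteq> (k, l)" "{i, j} \<inter> {k, l} \<noteq> {}"
  shows "(\<Sum>r\<in>PiE {0..<s} (\<lambda>_. B). of_bool (g (r i) (r j)) * of_bool (g (r k) (r l)) :: real)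
    \<le> real (card B) ^ (s - 3) * (\<Sum>a\<in>B. rel_degree w B a ^ 2)"
proof -
  obtain x y z where xyz: "x < s" "y < s" "z < s" "x \<noteq> y" "x \<noteq> z" "y \<noteq> z"
    "{i, j} = {x, y}" "{k, l} = {x, z}"
    using overlapping_index_pairsE[OF assms(4-7)] by blast
  have "(\<Sum>r\<in>PiE {0..<s} (\<lambda>_. B). of_bool (g (r i) (r j)) * of_bool (g (r k) (r l)) :: real)
      \<le> (\<Sum>r\<in>PiE {0..<s} (\<lambda>_. B). of_bool (w (r x) (r y)) * of_bool (w (r x) (r z)))"
    using of_bool_le_symmetric_superrel[where g=g and w=w, OF xyz(7) assms(2,3)]
      of_bool_le_symmetric_superrel[where g=g and w=w, OF xyz(8) assms(2,3)]
    by (intro sum_mono mult_mono) auto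
  also have "\<dots> = real (card B) ^ (s - 3) * (\<Sum>a\<in>B. \<Sum>b\<in>B. \<Sum>c\<in>B. of_bool (w a b) * of_bool (w a c))"
    using xyz sum_PiE_const_three_coords[where I="{0..<s}" and B=B and f="\<lambda>a b c. of_bool (w a b) * of_bool (w a c)"]
    by (simp del: sum_mult_of_bool_eq sum_of_bool_mult_eq)
  also have "(\<Sum>a\<in>B. \<Sum>b\<in>B. \<Sum>c\<in>B. of_bool (w a b) * of_bool (w a c)) = (\<Sum>a\<in>B. rel_degree w B a ^ 2)"
    unfolding rel_degree_def power2_eq_square sum_distrib_left sum_distrib_right
    by (simp add: mult.commute del: sum_mult_of_bool_eq sum_of_bool_mult_eq sum_of_bool_eq)
  finally show ?thesis .
qed

lemma sum_PiE_pair_indicators_le: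
  assumes "finite B" "\<And>a b. g a b \<Longrightarrow> w a b" "\<And>a b. w a b = w b a"
    and "(i, j) \<in> index_pairs s" "(k, l) \<in> index_pairs s"
  shows "(\<Sum>r\<in>PiE {0..<s} (\<lambda>_. B). of_bool (g (r i) (r j)) * of_bool (g (r k) (r l)) :: real)
    \<le> real (card B) ^ (s - 4) * rel_count g B ^ 2
      + of_bool ((i, j) = (k, l)) * (real (card B) ^ (s - 2) * rel_count w B)
      + of_bool ({i, j} \<inter> {k, l} \<noteq> {}) * (real (card B) ^ (s - 3) * (\<Sum>a\<in>B. rel_degree w B a ^ 2))"
proof -
  have nonneg: "0 \<le> real (card B) ^ (s - 4) * rel_count g B ^ 2"
    "0 \<le> real (card B) ^ (s - 2) * rel_count w B"
    "0 \<le> real (card B) ^ (s - 3) * (\<Sum>a\<in>B. rel_degree w B a ^ 2)"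
    unfolding rel_count_def by (intro mult_nonneg_nonneg sum_nonneg; simp)+
  consider "{i, j} \<inter> {k, l} = {}" | "(i, j) = (k, l)" | "(i, j) \<noteq> (k, l)" "{i, j} \<inter> {k, l} \<noteq> {}"
    by blast
  then show ?thesis
  proof cases
    case 1
    then show ?thesis using sum_PiE_disjoint_pairs[OF assms(1,4,5) 1] nonneg by simp
  next
    case 2
    then have "(\<Sum>r\<in>PiE {0..<s} (\<lambda>_. B). of_bool (g (r i) (r j)) * of_bool (g (r k) (r l)) :: real)
        = real (card B) ^ (s - 2) * rel_count g B"
      using sum_PiE_pair_indicator[OF assms(1,4)] by (simp add: of_bool_conj[symmetric] del: sum_of_bool_eq)
    also have "\<dots> \<le> real (card B) ^ (s - 2) * rel_count w B"
      using rel_count_mono[of g w B] assms(2) by (intro mult_left_mono) auto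
    finally have "(\<Sum>r\<in>PiE {0..<s} (\<lambda>_. B). of_bool (g (r i) (r j)) * of_bool (g (r k) (r l)) :: real)
        \<le> real (card B) ^ (s - 2) * rel_count w B" .
    moreover have "of_bool ((i, j) = (k, l)) = (1 :: real)" "of_bool ({i, j} \<inter> {k, l} \<noteq> {}) = (1 :: real)"
      using 2 by auto
    ultimately show ?thesis using nonneg by (simp only: mult_1)
  next
    case 3
    have "(\<Sum>r\<in>PiE {0..<s} (\<lambda>_. B). of_bool (g (r i) (r j)) * of_bool (g (r k) (r l)) :: real)
        \<le> real (card B) ^ (s - 3) * (\<Sum>a\<in>B. rel_degree w B a ^ 2)"
      using assms 3 by (rule sum_PiE_overlapping_pairs)
    moreover have "of_bool ((i, j) = (k, l)) = (0 :: real)" "of_bool ({i, j} \<inter> {k, l} \<noteq> {}) = (1 :: real)"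
      using 3 by auto
    ultimately show ?thesis using nonneg by (simp only: mult_1 mult_zero_left)
  qed
qed

lemma card_overlapping_index_pairs:
  "(\<Sum>(k, l)\<in>index_pairs s. of_bool ({i, j} \<inter> {k, l} \<noteq> {}) :: real) \<le> 4 * real s"
proof -
  let ?A = "{i, j} \<times> {0..<s} \<union> {0..<s} \<times> {i, j}"
  have "index_pairs s \<inter> {(k, l). {i, j} \<inter> {k, l} \<noteq> {}} \<subseteq> ?A"
    by (auto simp: index_pairs_def)
  then have "card (index_pairs s \<inter> {(k, l). {i, j} \<inter> {k, l} \<noteq> {}}) \<le> card ?A"
    by (intro card_mono) auto
  also have "\<dots> \<le> card ({i, j} \<times> {0..<s}) + card ({0..<s} \<times> {i, j})"
    by (rule card_Un_le)
  also have "\<dots> \<le> 2 * s + 2 * s"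
    by (intro add_mono) (simp_all add: card_cartesian_product card_insert_if)
  finally show ?thesis by (simp add: case_prod_beta' del: of_bool_or_iff)
qed

lemma sum_pair_count_square_le:
  fixes B :: "'b set" and s :: nat and g w :: "'b \<Rightarrow> 'b \<Rightarrow> bool"
  assumes "finite B" "\<And>a b. g a b \<Longrightarrow> w a b" "\<And>a b. w a b = w b a"
  defines "P \<equiv> real (card (index_pairs s))"
    and "A \<equiv> real (card B) ^ (s - 4) * rel_count g B ^ 2"
    and "C \<equiv> real (card B) ^ (s - 2) * rel_count w B"
    and "D \<equiv> real (card B) ^ (s - 3) * (\<Sum>a\<in>B. rel_degree w B a ^ 2)"
  shows "(\<Sum>r\<in>PiE {0..<s} (\<lambda>_. B). pair_count g s r ^ 2) \<le> P * (P * A + C + 4 * real s * D)"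
proof -
  let ?\<Omega> = "PiE {0..<s} (\<lambda>_. B)" and ?I = "index_pairs s"
  have D: "D \<ge> 0" unfolding D_def by (intro mult_nonneg_nonneg sum_nonneg) auto
  have "(\<Sum>r\<in>?\<Omega>. pair_count g s r ^ 2)
      = (\<Sum>r\<in>?\<Omega>. \<Sum>(i, j)\<in>?I. \<Sum>(k, l)\<in>?I. of_bool (g (r i) (r j)) * of_bool (g (r k) (r l)))"
    unfolding pair_count_def power2_eq_square sum_product case_prod_beta' ..
  also have "\<dots> = (\<Sum>(i, j)\<in>?I. \<Sum>(k, l)\<in>?I. \<Sum>r\<in>?\<Omega>. of_bool (g (r i) (r j)) * of_bool (g (r k) (r l)))"
    unfolding case_prod_beta' by (subst sum.swap, rule sum.cong[OF refl], rule sum.swap)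
  also have "\<dots> \<le> (\<Sum>(i, j)\<in>?I. \<Sum>(k, l)\<in>?I. A + of_bool ((i, j) = (k, l)) * C + of_bool ({i, j} \<inter> {k, l} \<noteq> {}) * D)"
    unfolding A_def C_def D_def
  proof (intro sum_mono, clarify, intro sum_mono, clarify)
    fix i j k l assume ij: "(i, j) \<in> ?I" and kl: "(k, l) \<in> ?I"
    show "(\<Sum>r\<in>?\<Omega>. of_bool (g (r i) (r j)) * of_bool (g (r k) (r l)))
      \<le> real (card B) ^ (s - 4) * rel_count g B ^ 2
        + of_bool ((i, j) = (k, l)) * (real (card B) ^ (s - 2) * rel_count w B)
        + of_bool ({i, j} \<inter> {k, l} \<noteq> {}) * (real (card B) ^ (s - 3) * (\<Sum>a\<in>B. rel_degree w B a ^ 2))"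
      using assms(1-3) ij kl by (rule sum_PiE_pair_indicators_le)
  qed
  also have "\<dots> = (\<Sum>(i, j)\<in>?I. P * A + C + (\<Sum>(k, l)\<in>?I. of_bool ({i, j} \<inter> {k, l} \<noteq> {})) * D)"
  proof (intro sum.cong refl, clarify)
    fix i j assume "(i, j) \<in> ?I"
    then have "?I \<inter> {x. i = fst x \<and> j = snd x} = {(i, j)}" by auto
    then show "(\<Sum>(k, l)\<in>?I. A + of_bool ((i, j) = (k, l)) * C + of_bool ({i, j} \<inter> {k, l} \<noteq> {}) * D)
        = P * A + C + (\<Sum>(k, l)\<in>?I. of_bool ({i, j} \<inter> {k, l} \<noteq> {})) * D"
      by (simp add: sum.distrib sum_distrib_right P_def case_prod_beta' del: of_bool_or_iff)
  qed
  also have "\<dots> \<le> (\<Sum>(i, j)\<in>?I. P * A + C + 4 * real s * D)"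
  proof (intro sum_mono, clarify)
    fix i j
    show "P * A + C + (\<Sum>(k, l)\<in>?I. of_bool ({i, j} \<inter> {k, l} \<noteq> {})) * D \<le> P * A + C + 4 * real s * D"
      using mult_right_mono[OF card_overlapping_index_pairs[of i j s] D] by linarith
  qed
  also have "\<dots> = P * (P * A + C + 4 * real s * D)"
    by (simp add: P_def)
  finally show ?thesis .
qed

lemma pair_count_variance_le:
  assumes "finite B" "B \<noteq> {}" "\<And>a b. g a b \<Longrightarrow> w a b" "\<And>a b. w a b = w b a" "s \<ge> 4"
  defines "\<Omega> \<equiv> PiE {0..<s} (\<lambda>_. B)" and "P \<equiv> real (card (index_pairs s))" and "M \<equiv> real (card B)"
  shows "(\<Sum>r\<in>\<Omega>. (pair_count g s r - uexp \<Omega> (pair_count g s)) ^ 2)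
    \<le> real (card \<Omega>) * (P * rel_count w B / M ^ 2 + 4 * real s * P * (\<Sum>a\<in>B. rel_degree w B a ^ 2) / M ^ 3)"
proof -
  have M: "M > 0" using assms(1,2) by (simp add: M_def card_gt_0_iff)
  have finite: "finite \<Omega>" by (simp add: \<Omega>_def finite_PiE assms(1))
  have card: "real (card \<Omega>) = M ^ s" by (simp add: \<Omega>_def M_def card_PiE_const)
  have pow: "M ^ (s - 2) = M ^ s / M ^ 2" "M ^ (s - 3) = M ^ s / M ^ 3" "M ^ (s - 4) = M ^ s / M ^ 4"
    using M assms(5) by (simp_all add: power_diff)
  have "(\<Sum>r\<in>\<Omega>. pair_count g s r) = P * (M ^ s / M ^ 2) * rel_count g B"
    using sum_pair_count[OF assms(1), of g s] pow(1) by (simp add: \<Omega>_def P_def M_def)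
  then have "(\<Sum>r\<in>\<Omega>. pair_count g s r) ^ 2 / real (card \<Omega>) = P * (P * (M ^ s / M ^ 4 * rel_count g B ^ 2))"
    using M unfolding card by (simp add: field_simps power2_eq_square eval_nat_numeral)
  moreover have "(\<Sum>r\<in>\<Omega>. pair_count g s r ^ 2) \<le> P * (P * (M ^ s / M ^ 4 * rel_count g B ^ 2)
      + M ^ s / M ^ 2 * rel_count w B + 4 * real s * (M ^ s / M ^ 3 * (\<Sum>a\<in>B. rel_degree w B a ^ 2)))"
    using sum_pair_count_square_le[OF assms(1,3,4), where s=s] unfolding \<Omega>_def P_def M_def pow[unfolded M_def]
    by (simp add: mult.assoc)
  ultimately have "(\<Sum>r\<in>\<Omega>. (pair_count g s r - uexp \<Omega> (pair_count g s)) ^ 2)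
      \<le> P * (M ^ s / M ^ 2 * rel_count w B + 4 * real s * (M ^ s / M ^ 3 * (\<Sum>a\<in>B. rel_degree w B a ^ 2)))"
    unfolding sum_power2_deviation_uexp[OF finite]
    by (simp add: algebra_simps)
  then show ?thesis unfolding card by (simp add: field_simps)
qed

lemma pair_count_deviation_card_less:
  assumes "finite B" "B \<noteq> {}" "\<And>a b. g a b \<Longrightarrow> w a b" "\<And>a b. w a b = w b a" "s \<ge> 4" "t > 0"
  defines "\<Omega> \<equiv> PiE {0..<s} (\<lambda>_. B)" and "P \<equiv> real (card (index_pairs s))" and "M \<equiv> real (card B)"
  assumes "P * rel_count w B / M ^ 2 + 4 * real s * P * (\<Sum>a\<in>B. rel_degree w B a ^ 2) / M ^ 3 < \<epsilon> * t ^ 2"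
  shows "real (card {r\<in>\<Omega>. t < \<bar>pair_count g s r - uexp \<Omega> (pair_count g s)\<bar>}) < \<epsilon> * real (card \<Omega>)"
proof (rule chebyshev_card_less)
  have "real (card \<Omega>) > 0"
    using assms(1,2) by (simp add: \<Omega>_def card_PiE_const card_gt_0_iff)
  have "(\<Sum>r\<in>\<Omega>. (pair_count g s r - uexp \<Omega> (pair_count g s)) ^ 2)
      \<le> real (card \<Omega>) * (P * rel_count w B / M ^ 2 + 4 * real s * P * (\<Sum>a\<in>B. rel_degree w B a ^ 2) / M ^ 3)"
    unfolding \<Omega>_def P_def M_def by (rule pair_count_variance_le[OF assms(1-5)])
  also have "\<dots> < real (card \<Omega>) * (\<epsilon> * t ^ 2)"
    using assms(10) \<open>real (card \<Omega>) > 0\<close> by (rule mult_strict_left_mono)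
  finally show "(\<Sum>r\<in>\<Omega>. (pair_count g s r - uexp \<Omega> (pair_count g s)) ^ 2) < \<epsilon> * t ^ 2 * real (card \<Omega>)"
    by (simp only: ac_simps)
qed (use assms in \<open>auto simp: \<Omega>_def finite_PiE\<close>)

lemma sample_size_ge:
  fixes M G \<beta> s :: real
  assumes "0 < M" "0 \<le> G" "G \<le> M ^ 2" "0 < \<beta>" "\<beta> \<le> 1" "0 \<le> s"
    and "10000 * M \<le> \<beta> ^ 3 * sqrt G * s"
  shows "10000 \<le> s"
proof -
  have "sqrt G \<le> sqrt (M ^ 2)" using assms(3) by (rule real_sqrt_le_mono)
  then have "sqrt G \<le> M" using assms(1) by simp
  have "10000 * M \<le> \<beta> ^ 3 * (sqrt G * s)"
    using assms(7) by (simp add: mult.assoc)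
  also have "\<dots> \<le> sqrt G * s"
    using assms(2,4-6) by (intro mult_left_le_one_le) (auto simp: power_le_one)
  also have "\<dots> \<le> M * s"
    using \<open>sqrt G \<le> M\<close> assms(6) by (rule mult_right_mono)
  finally show ?thesis using assms(1) by (simp add: mult.commute)
qed

lemma variance_budget_first_term:
  fixes M P Gg Gw s \<beta> :: real
  assumes "M > 0" "1 \<le> Gg" "Gg \<le> Gw" "s ^ 2 / 4 \<le> P" "0 < \<beta>" "\<beta> \<le> 1"
    and large: "10000 * M \<le> \<beta> ^ 3 * sqrt Gg * s"
  shows "250 < \<beta> ^ 3 * (P * Gw / M ^ 2)"
proof -
  have b3: "0 < \<beta> ^ 3" "\<beta> ^ 3 \<le> 1" using assms(5,6) by (auto simp: power_le_one)
  have P: "P \<ge> 0" using assms(4) zero_le_power2[of s] by linarith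
  have "(10000 * M) ^ 2 \<le> (\<beta> ^ 3 * sqrt Gg * s) ^ 2"
    using large assms(1) by (intro power_mono) auto
  also have "\<dots> = \<beta> ^ 3 * (\<beta> ^ 3 * (s ^ 2 * Gg))"
    using assms(2) by (simp add: power_mult_distrib)
  also have "\<dots> \<le> \<beta> ^ 3 * (s ^ 2 * Gg)"
    using b3 assms(2) by (intro mult_left_le_one_le) auto
  also have "\<dots> \<le> \<beta> ^ 3 * (4 * P * Gw)"
    using b3 assms(2-4) P by (intro mult_left_mono mult_mono) auto
  finally have "100000000 * M ^ 2 \<le> 4 * (\<beta> ^ 3 * (P * Gw))"
    by (simp add: power_mult_distrib algebra_simps)
  moreover have "0 < M ^ 2" using assms(1) by simp
  ultimately have "250 * M ^ 2 < \<beta> ^ 3 * (P * Gw)"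
    by linarith
  then show ?thesis using assms(1) by (simp add: field_simps)
qed

lemma variance_budget_second_term:
  fixes M P Gg Gw s \<beta> :: real
  assumes "M > 0" "1 \<le> Gg" "Gg \<le> Gw" "s ^ 2 / 4 \<le> P" "s > 0" "0 < \<beta>"
    and large: "10000 * M \<le> \<beta> ^ 3 * sqrt Gg * s"
  shows "4 * s * sqrt (2 * Gw) / M \<le> \<beta> ^ 3 * (P * Gw / M ^ 2) / 250"
proof -
  have P: "P \<ge> 0" using assms(4) zero_le_power2[of s] by linarith
  have "2500 * s * M \<le> s * (\<beta> ^ 3 * sqrt Gg * s) / 4"
    using large assms(5) by simp
  also have "\<dots> = \<beta> ^ 3 * (s ^ 2 / 4) * sqrt Gg"
    by (simp add: power2_eq_square)
  also have "\<dots> \<le> \<beta> ^ 3 * P * sqrt Gw"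
    using assms(2-4,6) P by (intro mult_mono mult_left_mono) auto
  finally have "2500 * (s * M) * sqrt Gw \<le> \<beta> ^ 3 * P * sqrt Gw * sqrt Gw"
    by (intro mult_right_mono) (use assms(2,3) in \<open>simp_all add: mult.assoc\<close>)
  also have "\<dots> = \<beta> ^ 3 * P * Gw"
    using assms(2,3) by (simp add: mult.assoc)
  finally have "2500 * (s * M) * sqrt Gw \<le> \<beta> ^ 3 * P * Gw" .
  moreover have "(s * M) * sqrt (2 * Gw) \<le> (s * M) * (2 * sqrt Gw)"
    using assms(1-3,5) by (intro mult_left_mono) (simp_all add: real_sqrt_mult real_le_lsqrt)
  moreover have "0 \<le> (s * M) * sqrt Gw" using assms(1-3,5) by simp
  ultimately have "4 * s * sqrt (2 * Gw) * M \<le> \<beta> ^ 3 * P * Gw / 250"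
    by (simp add: ac_simps)
  then show ?thesis
    using assms(1) by (simp add: field_simps power2_eq_square)
qed

text \<open>With c = 10000 each of the two terms of the variance bound is below half of the Chebyshev
  budget \<beta>' (\<beta>' E[Y])^2 = \<beta>^3 E[Y]^2/125.\<close>

lemma sample_variance_budget:
  fixes M P Gg Gw s \<beta> :: real
  assumes "M > 0" "1 \<le> Gg" "Gg \<le> Gw" "s ^ 2 / 4 \<le> P" "s > 0" "0 < \<beta>" "\<beta> \<le> 1"
    and large: "10000 * M \<le> \<beta> ^ 3 * sqrt Gg * s"
  shows "P * Gw / M ^ 2 + 4 * s * P * (Gw * sqrt (2 * Gw)) / M ^ 3 < \<beta> ^ 3 * (P * Gw / M ^ 2) ^ 2 / 125"
proof -
  define E where "E = P * Gw / M ^ 2"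
  have first: "1 < \<beta> ^ 3 * E / 250"
    using variance_budget_first_term[OF assms(1-4,6-8), folded E_def] by simp
  have second: "4 * s * sqrt (2 * Gw) / M \<le> \<beta> ^ 3 * E / 250"
    using variance_budget_second_term[OF assms(1-6,8), folded E_def] .
  have "0 < \<beta> ^ 3 * E" using first by simp
  then have E: "E > 0" using assms(6) by (simp add: zero_less_mult_iff)
  have "P * Gw / M ^ 2 + 4 * s * P * (Gw * sqrt (2 * Gw)) / M ^ 3 = E + E * (4 * s * sqrt (2 * Gw) / M)"
    using assms(1) by (simp add: E_def field_simps power2_eq_square power3_eq_cube)
  also have "\<dots> < E * (\<beta> ^ 3 * E / 250) + E * (\<beta> ^ 3 * E / 250)"
    using E first second by (intro add_less_le_mono mult_left_mono) auto
  also have "\<dots> = \<beta> ^ 3 * (P * Gw / M ^ 2) ^ 2 / 125"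
    by (simp add: E_def power2_eq_square ac_simps)
  finally show ?thesis .
qed

text \<open>In the application w relates stream positions forming a wedge and g those forming a
  future-closed wedge.\<close>

theorem pair_count_ratio_concentration:
  fixes B :: "'b set" and g w :: "'b \<Rightarrow> 'b \<Rightarrow> bool" and \<beta> :: real and s :: nat
  assumes B: "finite B" and sub: "\<And>a b. g a b \<Longrightarrow> w a b" and sym: "\<And>a b. w a b = w b a"
    and g_nonempty: "1 \<le> rel_count g B"
    and degree: "\<And>a. a \<in> B \<Longrightarrow> rel_degree w B a ^ 2 \<le> 2 * rel_count w B"
    and \<beta>: "0 < \<beta>" "\<beta> < 1"
    and large: "10000 * real (card B) \<le> \<beta> ^ 3 * sqrt (rel_count g B) * real s"
  defines "\<Omega> \<equiv> PiE {0..<s} (\<lambda>_. B)"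
  shows "let E = (\<lambda>r. max \<bar>pair_count w s r - uexp \<Omega> (pair_count w s)\<bar> \<bar>pair_count g s r - uexp \<Omega> (pair_count g s)\<bar>
      \<le> \<beta> / 5 * uexp \<Omega> (pair_count w s))
    in uprob \<Omega> E > 1 - 2 * (\<beta> / 5) \<and> (\<forall>r\<in>\<Omega>. E r \<longrightarrow> pair_count w s r > 0)
      \<and> \<bar>ucondexp \<Omega> E (\<lambda>r. pair_count g s r / pair_count w s r) - rel_count g B / rel_count w B\<bar> \<le> 4 * (\<beta> / 5)"
proof -
  define M P Gg Gw where "M = real (card B)" and "P = real (card (index_pairs s))"
    and "Gg = rel_count g B" and "Gw = rel_count w B"
  define EY where "EY = P * Gw / M ^ 2"
  have Gg: "1 \<le> Gg" "Gg \<le> Gw" using g_nonempty rel_count_mono[OF sub] by (simp_all add: Gg_def Gw_def)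
  have Gw_le: "Gw \<le> M ^ 2" using rel_count_le_card_square by (simp add: Gw_def M_def)
  then have M: "M > 0" using Gg by (cases "M = 0") (auto simp: M_def)
  then have B_ne: "B \<noteq> {}" by (auto simp: M_def)
  have s: "10000 \<le> real s"
    using sample_size_ge[OF M _ _ \<beta>(1) _ _ large[folded M_def Gg_def]] Gg Gw_le \<beta>(2) by simp
  then have P: "real s ^ 2 / 4 \<le> P" unfolding P_def by (intro card_index_pairs_ge) simp
  have "0 < real s ^ 2 / 4" using s by simp
  then have P_pos: "0 < P" using P by linarith
  then have EY: "EY > 0" using M Gg unfolding EY_def by (intro divide_pos_pos mult_pos_pos) auto
  have uexp_w: "uexp \<Omega> (pair_count w s) = EY" and uexp_g: "uexp \<Omega> (pair_count g s) = Gg / Gw * EY"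
    using uexp_pair_count[OF B B_ne] s Gg by (simp_all add: \<Omega>_def EY_def P_def M_def Gg_def Gw_def)
  have "(\<Sum>a\<in>B. rel_degree w B a ^ 2) \<le> sqrt (2 * Gw) * Gw"
    using sum_power2_rel_degree_le[of B w "sqrt (2 * Gw)"] degree real_le_rsqrt by (simp add: Gw_def)
  then have "P * Gw / M ^ 2 + 4 * real s * P * (\<Sum>a\<in>B. rel_degree w B a ^ 2) / M ^ 3
      \<le> P * Gw / M ^ 2 + 4 * real s * P * (Gw * sqrt (2 * Gw)) / M ^ 3"
    using P_pos M by (intro add_left_mono divide_right_mono mult_left_mono) (auto simp: mult.commute)
  also have "\<dots> < \<beta> ^ 3 * EY ^ 2 / 125"
    using sample_variance_budget[OF M Gg P _ \<beta>(1) _ large[folded M_def Gg_def]] s \<beta>(2)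
    by (simp add: EY_def)
  also have "\<dots> = \<beta> / 5 * (\<beta> / 5 * EY) ^ 2"
    by (simp add: power2_eq_square power3_eq_cube)
  finally have variance: "P * Gw / M ^ 2 + 4 * real s * P * (\<Sum>a\<in>B. rel_degree w B a ^ 2) / M ^ 3
      < \<beta> / 5 * (\<beta> / 5 * EY) ^ 2" .
  have deviation: "real (card {r\<in>\<Omega>. \<beta> / 5 * EY < \<bar>pair_count h s r - uexp \<Omega> (pair_count h s)\<bar>})
      < \<beta> / 5 * real (card \<Omega>)" if "\<And>a b. h a b \<Longrightarrow> w a b" for h
    unfolding \<Omega>_def
  proof (rule pair_count_deviation_card_less[where g = h and w = w, OF B B_ne _ sym])
    show "h a b \<Longrightarrow> w a b" for a b by (rule that)
    show "4 \<le> s" "0 < \<beta> / 5 * EY" using s \<beta> EY by simp_all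
  qed (fact variance[unfolded P_def M_def Gw_def])
  have q: "0 \<le> Gg / Gw" "Gg / Gw \<le> 1" using Gg by auto
  have "finite \<Omega>" using B by (simp add: \<Omega>_def finite_PiE)
  from concentrated_ratio_estimate[OF this _ _ q _ _ deviation[of w, folded uexp_w] deviation[of g, folded uexp_w]]
  show ?thesis
    using EY \<beta> sub by (simp add: Let_def uexp_w uexp_g Gg_def Gw_def)
qed

section \<open>Wedges and triangles of an edge stream\<close>

lemma card_eq_twice_card_image:
  assumes "finite S" "\<And>x. x \<in> S \<Longrightarrow> card {y \<in> S. f y = f x} = 2"
  shows "card S = 2 * card (f ` S)"
proof -
  have "card S = (\<Sum>u\<in>f ` S. card {x \<in> S. f x = u})"
    using sum.image_gen[OF assms(1), of "\<lambda>_. 1::nat" f] by simp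
  also have "\<dots> = (\<Sum>u\<in>f ` S. 2)"
    by (rule sum.cong) (auto simp: assms(2))
  finally show ?thesis by simp
qed

lemma card2_subset_card3E:
  assumes "card t = 3" "V \<subseteq> t" "card V = 2"
  obtains x where "x \<in> t" "V = t - {x}"
proof -
  have "finite t" using assms(1) by (metis card.infinite zero_neq_numeral)
  then have "card (t - V) = 1" using assms by (simp add: card_Diff_subset finite_subset)
  then obtain x where "t - V = {x}" by (meson card_1_singletonE)
  then show thesis using assms(2) that[of x] by auto
qed

lemma card2_subsets_card3_cases:
  assumes "card t = 3" "X \<subseteq> t" "Y \<subseteq> t" "Z \<subseteq> t" "V \<subseteq> t"
    "card X = 2" "card Y = 2" "card Z = 2" "card V = 2" "X \<noteq> Y" "X \<noteq> Z" "Y \<noteq> Z"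
  shows "V = X \<or> V = Y \<or> V = Z"
proof -
  have t: "finite t" using assms(1) by (metis card.infinite zero_neq_numeral)
  obtain x y z v where xyzv: "x \<in> t" "X = t - {x}" "y \<in> t" "Y = t - {y}" "z \<in> t" "Z = t - {z}"
    "v \<in> t" "V = t - {v}"
    using card2_subset_card3E assms(1-9) by metis
  then have "{x, y, z} \<subseteq> t" "card {x, y, z} = 3" using assms(10-12) by auto
  then have "{x, y, z} = t" using card_subset_eq[OF t] assms(1) by metis
  then show ?thesis using xyzv by auto
qed

lemma card2_subsets_card3_Un:
  assumes "card t = 3" "X \<subseteq> t" "Y \<subseteq> t" "card X = 2" "card Y = 2" "X \<noteq> Y"
  shows "X \<union> Y = t" "card (X \<inter> Y) = 1"
proof -
  have t: "finite t" using assms(1) by (metis card.infinite zero_neq_numeral)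
  then have XY: "finite X" "finite Y" using assms(2,3) finite_subset by auto
  have "\<not> Y \<subseteq> X" using card_subset_eq[OF XY(1)] assms(4-6) by metis
  then have "card X < card (X \<union> Y)" using XY by (intro psubset_card_mono) auto
  moreover have "card (X \<union> Y) \<le> 3" using assms(1-3) t by (metis card_mono le_sup_iff)
  ultimately have "card (X \<union> Y) = 3" using assms(4) by simp
  then show "X \<union> Y = t" using card_subset_eq[OF t, of "X \<union> Y"] assms(1-3) by simp
  show "card (X \<inter> Y) = 1" using card_Un_Int[OF XY] \<open>card (X \<union> Y) = 3\<close> assms(4,5) by simp
qed

lemma card2_share_imp_card_Int:
  assumes "card X = 2" "card Y = 2" "X \<noteq> Y" "u \<in> X" "u \<in> Y"
  shows "card (X \<inter> Y) = 1"
proof -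
  have XY: "finite X" "finite Y" using assms(1,2) by (auto intro: card_ge_0_finite)
  have "X \<inter> Y \<subset> X" using card_subset_eq[OF XY(2)] assms(1-3) by (metis Int_lower1 Int_lower2 psubsetI)
  then have "card (X \<inter> Y) < 2" using XY assms(1) by (metis psubset_card_mono)
  moreover have "card (X \<inter> Y) \<noteq> 0" using XY assms(4,5) by auto
  ultimately show ?thesis by simp
qed

lemma card_offdiag:
  assumes "finite X"
  shows "card {(x, y). x \<in> X \<and> y \<in> X \<and> x \<noteq> y} = card X * card X - card X"
proof -
  have "{(x, y). x \<in> X \<and> y \<in> X \<and> x \<noteq> y} = X \<times> X - (\<lambda>x. (x, x)) ` X" by auto
  moreover have "card ((\<lambda>x. (x, x)) ` X) = card X" by (rule card_image) (auto simp: inj_on_def)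
  moreover have "(\<lambda>x. (x, x)) ` X \<subseteq> X \<times> X" "finite ((\<lambda>x. (x, x)) ` X)" using assms by auto
  ultimately show ?thesis using assms by (simp add: card_Diff_subset card_cartesian_product)
qed

lemma sum_square_le_twice_sum_squares: "((a::nat) + b) ^ 2 \<le> 2 * (a ^ 2 + b ^ 2)"
proof -
  have "(int a + int b) ^ 2 \<le> 2 * (int a ^ 2 + int b ^ 2)"
    using zero_le_power2[of "int a - int b"] by (simp add: power2_eq_square algebra_simps)
  then have "int ((a + b) ^ 2) \<le> int (2 * (a ^ 2 + b ^ 2))" by simp
  then show ?thesis by (simp only: of_nat_le_iff)
qed

lemma sorted3E:
  fixes p1 p2 p3 :: nat
  assumes "p1 \<noteq> p2" "p1 \<noteq> p3" "p2 \<noteq> p3"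
  obtains i j k where "i < j" "j < k" "{i, j, k} = {p1, p2, p3}"
  using assms by (metis insert_commute linorder_neqE_nat)

definition wedge_pos :: "'a set list \<Rightarrow> nat \<Rightarrow> nat \<Rightarrow> bool" where
  "wedge_pos es p q \<longleftrightarrow> is_wedge (es ! p) (es ! q)"

lemma is_wedge_commute: "is_wedge e f = is_wedge f e"
  by (auto simp: is_wedge_def Int_commute)

lemma wedge_pos_commute: "wedge_pos es p q = wedge_pos es q p"
  by (simp add: wedge_pos_def is_wedge_commute)

lemma fc_wedge_pos_imp_wedge_pos: "fc_wedge_pos es p q \<Longrightarrow> wedge_pos es p q"
  by (auto simp: fc_wedge_pos_def fc_pos_def wedge_pos_def is_wedge_commute)

lemma Ycount_eq_pair_count: "real (Ycount es s r) = pair_count (wedge_pos es) s r"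
  by (simp add: Ycount_def pair_count_eq_card wedge_pos_def)

lemma Zcount_eq_pair_count: "real (Zcount es s r) = pair_count (fc_wedge_pos es) s r"
  by (simp add: Zcount_def pair_count_eq_card)

definition other_edges_at :: "'a set list \<Rightarrow> nat \<Rightarrow> 'a \<Rightarrow> nat set" where
  "other_edges_at es p z = {q. q < length es \<and> q \<noteq> p \<and> z \<in> es ! q}"

lemma fc_pos_less_length: "fc_pos es i j \<Longrightarrow> i < length es \<and> j < length es"
  by (auto simp: fc_pos_def)

definition triangles :: "'a set list \<Rightarrow> 'a set set" where
  "triangles es = {t. card t = 3 \<and> (\<forall>u\<in>t. \<forall>v\<in>t. u \<noteq> v \<longrightarrow> {u, v} \<in> set es)}"

lemma num_triangles_eq_card: "num_triangles es = card (triangles es)"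
  by (simp add: num_triangles_def triangles_def)

context
  fixes es :: "'a set list"
  assumes es: "edge_stream es"
begin

lemma edge_stream_card_nth: "p < length es \<Longrightarrow> card (es ! p) = 2"
  using es unfolding edge_stream_def by auto

lemma edge_stream_nth_eq_iff: "p < length es \<Longrightarrow> q < length es \<Longrightarrow> es ! p = es ! q \<longleftrightarrow> p = q"
  using es unfolding edge_stream_def by (simp add: nth_eq_iff_index_eq)

lemma fc_pos_triangle:
  assumes "fc_pos es i j"
  obtains k where "i < j" "j < k" "k < length es" "card (es ! i \<union> es ! j) = 3" "es ! k \<subseteq> es ! i \<union> es ! j"
    "\<And>p. p < length es \<Longrightarrow> es ! p \<subseteq> es ! i \<union> es ! j \<Longrightarrow> p = i \<or> p = j \<or> p = k"
proof -
  obtain k where k: "i < j" "j < k" "k < length es" "is_wedge (es ! i) (es ! j)"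
    "card (es ! i \<union> es ! j \<union> es ! k) = 3"
    using assms unfolding fc_pos_def by blast
  have card2: "card (es ! i) = 2" "card (es ! j) = 2" "card (es ! k) = 2"
    using edge_stream_card_nth k(1-3) by auto
  then have fin: "finite (es ! i)" "finite (es ! j)" "finite (es ! k)"
    by (auto intro: card_ge_0_finite)
  have t: "card (es ! i \<union> es ! j) = 3"
    using card_Un_Int[OF fin(1,2)] card2 k(4) by (simp add: is_wedge_def)
  then have sub: "es ! k \<subseteq> es ! i \<union> es ! j"
    using card_subset_eq[of "es ! i \<union> es ! j \<union> es ! k" "es ! i \<union> es ! j"] fin k(5) by auto
  have "p = i \<or> p = j \<or> p = k" if "p < length es" "es ! p \<subseteq> es ! i \<union> es ! j" for p
  proof -
    have "es ! i \<noteq> es ! j" "es ! i \<noteq> es ! k" "es ! j \<noteq> es ! k" using k edge_stream_nth_eq_iff by auto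
    then have "es ! p = es ! i \<or> es ! p = es ! j \<or> es ! p = es ! k"
      using card2_subsets_card3_cases[OF t, of "es ! i" "es ! j" "es ! k" "es ! p"] sub that card2 edge_stream_card_nth
      by blast
    then show ?thesis using edge_stream_nth_eq_iff that k by auto
  qed
  then show thesis using that k t sub by blast
qed

lemma fc_pos_Un_in_triangles:
  assumes "fc_pos es i j"
  shows "es ! i \<union> es ! j \<in> triangles es"
proof -
  obtain k where k: "i < j" "j < k" "k < length es" "card (es ! i \<union> es ! j) = 3" "es ! k \<subseteq> es ! i \<union> es ! j"
    using fc_pos_triangle[OF assms] by metis
  have card2: "card (es ! i) = 2" "card (es ! j) = 2" "card (es ! k) = 2"
    using edge_stream_card_nth k(1-3) by auto
  have distinct: "es ! i \<noteq> es ! j" "es ! i \<noteq> es ! k" "es ! j \<noteq> es ! k"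
    using k edge_stream_nth_eq_iff by auto
  have "{u, v} \<in> set es" if "u \<in> es ! i \<union> es ! j" "v \<in> es ! i \<union> es ! j" "u \<noteq> v" for u v
  proof -
    have "{u, v} \<subseteq> es ! i \<union> es ! j" "card {u, v} = 2" using that by auto
    then have "{u, v} = es ! i \<or> {u, v} = es ! j \<or> {u, v} = es ! k"
      using card2_subsets_card3_cases[OF k(4) Un_upper1 Un_upper2 k(5) _ card2 _ distinct] by blast
    then show ?thesis using k by auto
  qed
  then show ?thesis using k(4) by (simp add: triangles_def)
qed

lemma fc_pos_unique:
  assumes "fc_pos es i j" "fc_pos es i' j'" "es ! i \<union> es ! j = es ! i' \<union> es ! j'"
  shows "i = i' \<and> j = j'"
proof -
  obtain k where k: "i < j" "j < k" "k < length es"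
    "\<And>p. p < length es \<Longrightarrow> es ! p \<subseteq> es ! i \<union> es ! j \<Longrightarrow> p = i \<or> p = j \<or> p = k"
    using fc_pos_triangle[OF assms(1)] by metis
  obtain k' where k': "i' < j'" "j' < k'" "k' < length es"
    "\<And>p. p < length es \<Longrightarrow> es ! p \<subseteq> es ! i' \<union> es ! j' \<Longrightarrow> p = i' \<or> p = j' \<or> p = k'"
    using fc_pos_triangle[OF assms(2)] by metis
  have "i' = i \<or> i' = j \<or> i' = k" "j' = i \<or> j' = j \<or> j' = k"
    using k(4)[of i'] k(4)[of j'] k'(1-3) assms(3) by auto
  moreover have "i = i' \<or> i = j' \<or> i = k'" "j = i' \<or> j = j' \<or> j = k'"
    using k'(4)[of i] k'(4)[of j] k(1-3) assms(3) by auto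
  ultimately show ?thesis using k(1,2) k'(1,2) by linarith
qed

lemma triangle_eq_fc_pos_Un:
  assumes "t \<in> triangles es"
  obtains i j where "fc_pos es i j" "es ! i \<union> es ! j = t"
proof -
  have t: "card t = 3" "\<forall>u\<in>t. \<forall>v\<in>t. u \<noteq> v \<longrightarrow> {u, v} \<in> set es"
    using assms by (auto simp: triangles_def)
  obtain a b c where abc: "t = {a, b, c}" "a \<noteq> b" "b \<noteq> c" "a \<noteq> c"
    using t(1) card_3_iff by metis
  then have "{a, b} \<in> set es" "{b, c} \<in> set es" "{a, c} \<in> set es" using t(2) by auto
  then obtain p1 p2 p3 where p: "p1 < length es" "es ! p1 = {a, b}" "p2 < length es" "es ! p2 = {b, c}"
    "p3 < length es" "es ! p3 = {a, c}"
    by (metis in_set_conv_nth)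
  then have "p1 \<noteq> p2" "p1 \<noteq> p3" "p2 \<noteq> p3" using abc by (auto simp: doubleton_eq_iff)
  then obtain i j k where ijk: "i < j" "j < k" "{i, j, k} = {p1, p2, p3}"
    by (rule sorted3E)
  have "\<And>x. x \<in> {p1, p2, p3} \<Longrightarrow> es ! x \<subseteq> t \<and> x < length es"
    using p abc by auto
  moreover have "i \<in> {p1, p2, p3}" "j \<in> {p1, p2, p3}" "k \<in> {p1, p2, p3}"
    using ijk(3) by blast+
  ultimately have sub: "es ! i \<subseteq> t" "es ! j \<subseteq> t" "es ! k \<subseteq> t" "k < length es"
    by blast+
  have card2: "card (es ! i) = 2" "card (es ! j) = 2" using edge_stream_card_nth ijk sub(4) by auto
  have "es ! i \<noteq> es ! j" using edge_stream_nth_eq_iff ijk sub(4) by auto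
  then have Un: "es ! i \<union> es ! j = t" "card (es ! i \<inter> es ! j) = 1"
    using card2_subsets_card3_Un[OF t(1) sub(1,2) card2] by auto
  have "is_wedge (es ! i) (es ! j)"
    using \<open>es ! i \<noteq> es ! j\<close> Un(2) by (simp add: is_wedge_def)
  moreover have "card (es ! i \<union> es ! j \<union> es ! k) = 3"
    using Un(1) sub(3) t(1) by (simp add: Un_absorb2)
  ultimately have "fc_pos es i j"
    using ijk(1,2) sub(4) unfolding fc_pos_def by (intro conjI exI[of _ k]) auto
  then show thesis using that Un by blast
qed

lemma card_wedge_positions:
  "card {(p, q). p < length es \<and> q < length es \<and> is_wedge (es ! p) (es ! q)} = 2 * num_wedges es"
proof -
  define S where "S = {(p, q). p < length es \<and> q < length es \<and> is_wedge (es ! p) (es ! q)}"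
  define f where "f = (\<lambda>(p, q). {es ! p, es ! q})"
  have "finite S" unfolding S_def
    by (rule finite_subset[of _ "{..<length es} \<times> {..<length es}"]) auto
  moreover have "card {y\<in>S. f y = f x} = 2" if "x \<in> S" for x
  proof -
    obtain p q where "x = (p, q)" by (cases x)
    with that have x: "x = (p, q)" "p < length es" "q < length es" "is_wedge (es ! p) (es ! q)"
      by (auto simp: S_def)
    then have "es ! p \<noteq> es ! q" by (simp add: is_wedge_def)
    have "{y\<in>S. f y = f x} = {(p, q), (q, p)}"
    proof (intro equalityI subsetI)
      fix y assume "y \<in> {y\<in>S. f y = f x}"
      then obtain p' q' where y: "y = (p', q')" "p' < length es" "q' < length es" "{es ! p', es ! q'} = {es ! p, es ! q}"
        using x by (auto simp: S_def f_def)
      then have "(p' = p \<and> q' = q) \<or> (p' = q \<and> q' = p)"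
        using x edge_stream_nth_eq_iff by (auto simp: doubleton_eq_iff)
      then show "y \<in> {(p, q), (q, p)}" using y by auto
    next
      fix y assume "y \<in> {(p, q), (q, p)}"
      then show "y \<in> {y\<in>S. f y = f x}"
        using x by (auto simp: S_def f_def is_wedge_def Int_commute insert_commute)
    qed
    then show ?thesis using \<open>es ! p \<noteq> es ! q\<close> by auto
  qed
  ultimately have "card S = 2 * card (f ` S)" by (rule card_eq_twice_card_image)
  moreover have "f ` S = {{e, f} | e f. e \<in> set es \<and> f \<in> set es \<and> is_wedge e f}"
    by (auto simp: S_def f_def in_set_conv_nth image_iff)
  ultimately show ?thesis by (simp add: S_def num_wedges_def)
qed

lemma fc_wedge_positions_Un_image:
  "(\<lambda>(p, q). es ! p \<union> es ! q) ` {(p, q). p < length es \<and> q < length es \<and> fc_wedge_pos es p q} = triangles es"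
proof (intro equalityI subsetI)
  fix t assume "t \<in> (\<lambda>(p, q). es ! p \<union> es ! q) ` {(p, q). p < length es \<and> q < length es \<and> fc_wedge_pos es p q}"
  then obtain p q where "t = es ! p \<union> es ! q" "fc_pos es p q \<or> fc_pos es q p"
    by (auto simp: fc_wedge_pos_def)
  then show "t \<in> triangles es"
    using fc_pos_Un_in_triangles by (metis Un_commute)
next
  fix t assume "t \<in> triangles es"
  then obtain i j where "fc_pos es i j" "es ! i \<union> es ! j = t"
    by (rule triangle_eq_fc_pos_Un)
  then show "t \<in> (\<lambda>(p, q). es ! p \<union> es ! q) ` {(p, q). p < length es \<and> q < length es \<and> fc_wedge_pos es p q}"
    using fc_pos_less_length by (force simp: fc_wedge_pos_def)
qed

lemma card_fc_wedge_positions: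
  "card {(p, q). p < length es \<and> q < length es \<and> fc_wedge_pos es p q} = 2 * num_triangles es"
proof -
  define S where "S = {(p, q). p < length es \<and> q < length es \<and> fc_wedge_pos es p q}"
  define f where "f = (\<lambda>(p, q). es ! p \<union> es ! q)"
  have "finite S" unfolding S_def
    by (rule finite_subset[of _ "{..<length es} \<times> {..<length es}"]) auto
  moreover have "card {y\<in>S. f y = f x} = 2" if "x \<in> S" for x
  proof -
    obtain p q where x: "x = (p, q)" by (cases x)
    with that have "fc_pos es p q \<or> fc_pos es q p" by (simp add: S_def fc_wedge_pos_def)
    then obtain i j where ij: "fc_pos es i j" "x = (i, j) \<or> x = (j, i)" using x by blast
    then have fx: "f x = es ! i \<union> es ! j" by (auto simp: f_def Un_commute)
    have "{y\<in>S. f y = f x} = {(i, j), (j, i)}"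
    proof (intro equalityI subsetI)
      fix y assume "y \<in> {y\<in>S. f y = f x}"
      then obtain p q where "y = (p, q)" "fc_pos es p q \<or> fc_pos es q p" "es ! p \<union> es ! q = es ! i \<union> es ! j"
        using fx by (auto simp: S_def f_def fc_wedge_pos_def)
      then show "y \<in> {(i, j), (j, i)}" using fc_pos_unique[OF _ ij(1)] by (metis Un_commute insertCI)
    next
      fix y assume "y \<in> {(i, j), (j, i)}"
      then show "y \<in> {y\<in>S. f y = f x}"
        using ij(1) fc_pos_less_length[OF ij(1)] fx by (auto simp: S_def f_def fc_wedge_pos_def Un_commute)
    qed
    moreover have "i \<noteq> j" using ij(1) by (simp add: fc_pos_def)
    ultimately show ?thesis by simp
  qed
  ultimately have "card S = 2 * card (f ` S)" by (rule card_eq_twice_card_image)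
  then show ?thesis
    using fc_wedge_positions_Un_image by (simp add: S_def f_def num_triangles_eq_card)
qed

lemma is_wedge_if_common_vertex:
  assumes "x < length es" "y < length es" "x \<noteq> y" "u \<in> es ! x" "u \<in> es ! y"
  shows "is_wedge (es ! x) (es ! y)"
proof -
  have "es ! x \<noteq> es ! y" using assms(1-3) edge_stream_nth_eq_iff by auto
  then show ?thesis
    using card2_share_imp_card_Int[OF edge_stream_card_nth edge_stream_card_nth] assms by (simp add: is_wedge_def)
qed

lemma card_wedge_neighbours_le:
  assumes "es ! p = {u, v}"
  shows "card {q. q < length es \<and> is_wedge (es ! p) (es ! q)}
    \<le> card (other_edges_at es p u) + card (other_edges_at es p v)"
proof -
  have "{q. q < length es \<and> is_wedge (es ! p) (es ! q)} \<subseteq> other_edges_at es p u \<union> other_edges_at es p v"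
  proof
    fix q assume "q \<in> {q. q < length es \<and> is_wedge (es ! p) (es ! q)}"
    then have q: "q < length es" "is_wedge (es ! p) (es ! q)" by simp_all
    then have "q \<noteq> p" "es ! p \<inter> es ! q \<noteq> {}" by (auto simp: is_wedge_def)
    then show "q \<in> other_edges_at es p u \<union> other_edges_at es p v"
      using q(1) assms by (auto simp: other_edges_at_def)
  qed
  then have "card {q. q < length es \<and> is_wedge (es ! p) (es ! q)} \<le> card (other_edges_at es p u \<union> other_edges_at es p v)"
    by (intro card_mono) (simp_all add: other_edges_at_def)
  also have "\<dots> \<le> card (other_edges_at es p u) + card (other_edges_at es p v)"
    by (rule card_Un_le)
  finally show ?thesis .
qed

text \<open>The edges through a common vertex pairwise form wedges, and the two such stars at the ends of
  e_p share only e_p; so the stars contribute disjoint sets of ordered wedge pairs.\<close>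

lemma card_other_edges_at_squares_le:
  assumes p: "p < length es" and uv: "es ! p = {u, v}" "u \<noteq> v"
  shows "card (other_edges_at es p u) ^ 2 + card (other_edges_at es p v) ^ 2
    \<le> card {(p, q). p < length es \<and> q < length es \<and> is_wedge (es ! p) (es ! q)}"
proof -
  define S where "S = {(p, q). p < length es \<and> q < length es \<and> is_wedge (es ! p) (es ! q)}"
  define star where "star z = insert p (other_edges_at es p z)" for z
  define offdiag where "offdiag X = {(x, y). x \<in> X \<and> y \<in> X \<and> x \<noteq> y}" for X :: "nat set"
  have star_wedges: "offdiag (star z) \<subseteq> S" if "z \<in> es ! p" for z
    using that p is_wedge_if_common_vertex by (auto simp: offdiag_def star_def other_edges_at_def S_def)
  have "other_edges_at es p u \<inter> other_edges_at es p v = {}"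
  proof (rule ccontr)
    assume "other_edges_at es p u \<inter> other_edges_at es p v \<noteq> {}"
    then obtain q where q: "q < length es" "q \<noteq> p" "es ! p \<subseteq> es ! q"
      using uv by (auto simp: other_edges_at_def)
    then have "es ! p = es ! q"
      using card_subset_eq[of "es ! q" "es ! p"] edge_stream_card_nth[OF p] edge_stream_card_nth[OF q(1)]
      by (simp add: card_ge_0_finite)
    then show False using q p edge_stream_nth_eq_iff by auto
  qed
  then have "offdiag (star u) \<inter> offdiag (star v) = {}"
    by (auto simp: offdiag_def star_def)
  moreover have "finite S" unfolding S_def
    by (rule finite_subset[of _ "{..<length es} \<times> {..<length es}"]) auto
  moreover have "offdiag (star u) \<union> offdiag (star v) \<subseteq> S"
    using star_wedges uv by auto
  ultimately have "card (offdiag (star u)) + card (offdiag (star v)) \<le> card S"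
    by (metis card_Un_disjoint card_mono finite_Un finite_subset)
  moreover have "card (offdiag (star z)) = card (other_edges_at es p z) ^ 2 + card (other_edges_at es p z)" for z
  proof -
    have "finite (other_edges_at es p z)" "p \<notin> other_edges_at es p z"
      by (simp_all add: other_edges_at_def)
    then show ?thesis
      using card_offdiag[of "star z"] by (simp add: offdiag_def star_def power2_eq_square)
  qed
  ultimately show ?thesis by (simp add: S_def)
qed

lemma wedge_degree_square_le:
  assumes p: "p < length es"
  shows "card {q. q < length es \<and> is_wedge (es ! p) (es ! q)} ^ 2
    \<le> 2 * card {(p, q). p < length es \<and> q < length es \<and> is_wedge (es ! p) (es ! q)}"
proof -
  obtain u v where uv: "es ! p = {u, v}" "u \<noteq> v" using edge_stream_card_nth[OF p] card_2_iff by metis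
  have "card {q. q < length es \<and> is_wedge (es ! p) (es ! q)} ^ 2
      \<le> (card (other_edges_at es p u) + card (other_edges_at es p v)) ^ 2"
    using card_wedge_neighbours_le[OF uv(1)] by (rule power_mono) simp
  also have "\<dots> \<le> 2 * (card (other_edges_at es p u) ^ 2 + card (other_edges_at es p v) ^ 2)"
    by (rule sum_square_le_twice_sum_squares)
  also have "\<dots> \<le> 2 * card {(p, q). p < length es \<and> q < length es \<and> is_wedge (es ! p) (es ! q)}"
    using card_other_edges_at_squares_le[OF p uv] by simp
  finally show ?thesis .
qed

lemma rel_count_wedge_pos: "rel_count (wedge_pos es) {0..<length es} = 2 * real (num_wedges es)"
  using card_wedge_positions by (simp add: rel_count_eq_card wedge_pos_def)

lemma rel_count_fc_wedge_pos: "rel_count (fc_wedge_pos es) {0..<length es} = 2 * real (num_triangles es)"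
  using card_fc_wedge_positions by (simp add: rel_count_eq_card)

lemma rel_degree_wedge_pos_square_le:
  assumes "p < length es"
  shows "rel_degree (wedge_pos es) {0..<length es} p ^ 2 \<le> 2 * rel_count (wedge_pos es) {0..<length es}"
proof -
  have "rel_degree (wedge_pos es) {0..<length es} p = real (card {q. q < length es \<and> is_wedge (es ! p) (es ! q)})"
    by (simp add: rel_degree_def wedge_pos_def Int_def)
  then show ?thesis
    using wedge_degree_square_le[OF assms] card_wedge_positions rel_count_wedge_pos
    by (simp flip: of_nat_power)
qed

end

theorem mainTheorem9:
  "\<exists>c::real. c > 0 \<and> (\<exists>\<beta>0::real. \<beta>0 > 0 \<and>
    (\<forall>(es :: nat set list) (\<beta>::real) (s::nat).
      edge_stream es \<longrightarrow>
      num_wedges es \<ge> length es \<longrightarrow>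
      num_triangles es \<ge> 1 \<longrightarrow>
      0 < \<beta> \<longrightarrow> \<beta> < \<beta>0 \<longrightarrow>
      real s \<ge> c * real (length es) / (\<beta> ^ 3 * sqrt (real (num_triangles es))) \<longrightarrow>
      (let \<Omega> = samples es s;
           Y = (\<lambda>r. real (Ycount es s r));
           Z = (\<lambda>r. real (Zcount es s r));
           \<beta>' = \<beta> / 5;
           \<kappa> = 3 * real (num_triangles es) / real (num_wedges es);
           \<E> = (\<lambda>r. max \<bar>Y r - uexp \<Omega> Y\<bar> \<bar>Z r - uexp \<Omega> Z\<bar> \<le> \<beta>' * uexp \<Omega> Y)
       in uprob \<Omega> \<E> > 1 - 2 * \<beta>' \<and>
          (\<forall>r\<in>\<Omega>. \<E> r \<longrightarrow> Y r > 0) \<and>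
          \<bar>ucondexp \<Omega> \<E> (\<lambda>r. Z r / Y r) - \<kappa> / 3\<bar> \<le> 4 * \<beta>')))"
proof (rule exI[of _ 10000], intro conjI exI[of _ 1] allI impI)
  fix es :: "nat set list" and \<beta> :: real and s :: nat
  assume es: "edge_stream es" and "num_wedges es \<ge> length es" and T: "num_triangles es \<ge> 1"
    and \<beta>: "0 < \<beta>" "\<beta> < 1"
    and s: "real s \<ge> 10000 * real (length es) / (\<beta> ^ 3 * sqrt (real (num_triangles es)))"
  have "10000 * real (card {0..<length es}) \<le> \<beta> ^ 3 * sqrt (real (num_triangles es)) * real s"
    using s \<beta> T by (simp add: pos_divide_le_eq mult.commute)
  also have "\<dots> \<le> \<beta> ^ 3 * sqrt (rel_count (fc_wedge_pos es) {0..<length es}) * real s"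
    using \<beta> by (intro mult_right_mono mult_left_mono) (auto simp: rel_count_fc_wedge_pos[OF es])
  finally have large: "10000 * real (card {0..<length es}) \<le> \<dots>" .
  have \<kappa>: "3 * real (num_triangles es) / real (num_wedges es) / 3
      = rel_count (fc_wedge_pos es) {0..<length es} / rel_count (wedge_pos es) {0..<length es}"
    by (simp add: rel_count_wedge_pos[OF es] rel_count_fc_wedge_pos[OF es])
  have "1 \<le> rel_count (fc_wedge_pos es) {0..<length es}"
    using T by (simp add: rel_count_fc_wedge_pos[OF es])
  from pair_count_ratio_concentration[where g = "fc_wedge_pos es" and w = "wedge_pos es",
      OF finite_atLeastLessThan fc_wedge_pos_imp_wedge_pos wedge_pos_commute this _ \<beta> large]
    rel_degree_wedge_pos_square_le[OF es]
  show "let \<Omega> = samples es s; Y = (\<lambda>r. real (Ycount es s r)); Z = (\<lambda>r. real (Zcount es s r)); \<beta>' = \<beta> / 5;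
           \<kappa> = 3 * real (num_triangles es) / real (num_wedges es);
           \<E> = (\<lambda>r. max \<bar>Y r - uexp \<Omega> Y\<bar> \<bar>Z r - uexp \<Omega> Z\<bar> \<le> \<beta>' * uexp \<Omega> Y)
       in uprob \<Omega> \<E> > 1 - 2 * \<beta>' \<and> (\<forall>r\<in>\<Omega>. \<E> r \<longrightarrow> Y r > 0) \<and>
          \<bar>ucondexp \<Omega> \<E> (\<lambda>r. Z r / Y r) - \<kappa> / 3\<bar> \<le> 4 * \<beta>'"
    unfolding Let_def samples_def Ycount_eq_pair_count Zcount_eq_pair_count \<kappa> by simp
qed simp_all

end
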